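(* Let $A$ be a bounded linear operator on a complex Hilbert space $\mathcal{H}$, and let $N(A)$ denote the set of all bounded normal operators $M$ on $\mathcal{H}$ with $AM = MA$. Then \[ \|A^*A - AA^*\| \le \inf_{M \in N(A)} \|A + M\|^2 . \]
   Context: $A^*A - AA^*$ is called the self-commutator of $A$ and is denoted $C(A)$. *)

theory Defs
  imports "HOL-Analysis.Analysis"
begin

text \<open>A complex Hilbert space is modelled as a real Hilbert space
  (type of class real_inner and complete_space) together with an orthogonal
  complex structure J (multiplication by the imaginary unit).
  The complex inner product is then  inner x y + i * inner x (J y)
  (its real part is the real inner product), and scalar multiplication
  by a + i b is  x \<mapsto> a x + b J x.\<close>

definition complex_structure :: "('a::real_inner \<Rightarrow> 'a) \<Rightarrow> bool" where
  "complex_structure J \<longleftrightarrow> linear J \<and> (\<forall>x. J (J x) = - x) \<and>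
     (\<forall>x y. inner (J x) (J y) = inner x y)"

definition bounded_clinear_op :: "('a::real_inner \<Rightarrow> 'a) \<Rightarrow> ('a \<Rightarrow> 'a) \<Rightarrow> bool" where
  "bounded_clinear_op J A \<longleftrightarrow> bounded_linear A \<and> (\<forall>x. A (J x) = J (A x))"

text \<open>Hilbert-space adjoint (for complex-linear operators the adjoint with
  respect to the real part of the complex inner product coincides with the
  complex adjoint).\<close>
definition hadjoint :: "('a::real_inner \<Rightarrow> 'a) \<Rightarrow> ('a \<Rightarrow> 'a)" where
  "hadjoint A = (THE B. \<forall>x y. inner (A x) y = inner x (B y))"

definition normal_op :: "('a::real_inner \<Rightarrow> 'a) \<Rightarrow> ('a \<Rightarrow> 'a) \<Rightarrow> bool" where
  "normal_op J M \<longleftrightarrow> bounded_clinear_op J M \<and> hadjoint M \<circ> M = M \<circ> hadjoint M"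

definition self_commutator :: "('a::real_inner \<Rightarrow> 'a) \<Rightarrow> ('a \<Rightarrow> 'a)" where
  "self_commutator A = (\<lambda>x. hadjoint A (A x) - A (hadjoint A x))"

definition normal_commutant :: "('a::real_inner \<Rightarrow> 'a) \<Rightarrow> ('a \<Rightarrow> 'a) \<Rightarrow> ('a \<Rightarrow> 'a) set" where
  "normal_commutant J A = {M. normal_op J M \<and> A \<circ> M = M \<circ> A}"

end

theory Submission
  imports Defs "HOL-Complex_Analysis.Cauchy_Integral_Formula"
begin

text \<open>If \<open>M\<close> is normal and commutes with \<open>A\<close>, Fuglede's theorem gives \<open>A M\<^sup>* = M\<^sup>* A\<close>, and then
  \<open>A + M\<close> has the same self-commutator as \<open>A\<close>. For every bounded \<open>B\<close> the self-commutator \<open>C(B)\<close> is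
  self-adjoint with \<open>\<bar>\<langle>C(B) x, x\<rangle>\<bar> = \<bar>\<parallel>B x\<parallel>\<^sup>2 - \<parallel>B\<^sup>* x\<parallel>\<^sup>2\<bar> \<le> \<parallel>B\<parallel>\<^sup>2 \<parallel>x\<parallel>\<^sup>2\<close>, hence \<open>\<parallel>C(B)\<parallel> \<le> \<parallel>B\<parallel>\<^sup>2\<close>;
  take \<open>B = A + M\<close>.

  Fuglede's theorem is proved by Rosenblum's argument: \<open>F z = exp (- z M\<^sup>*) A exp (z M\<^sup>*)\<close> equals
  \<open>exp Y A exp (- Y)\<close> with \<open>Y = z\<^sup>- M - z M\<^sup>*\<close> skew-adjoint, so \<open>F\<close> is a bounded entire function.
  By Liouville it is constant, and its derivative at \<open>0\<close> is \<open>A M\<^sup>* - M\<^sup>* A\<close>.\<close>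

section \<open>Completeness of the bounded operators\<close>

lemma blinfun_Cauchy_pointwise_limit:
  fixes X :: "nat \<Rightarrow> 'a::real_normed_vector \<Rightarrow>\<^sub>L 'b::{real_normed_vector,complete_space}"
  assumes "Cauchy X"
  obtains v where "bounded_linear v" "\<And>x. (\<lambda>n. X n x) \<longlonglongrightarrow> v x"
proof -
  have "Cauchy (\<lambda>n. X n x)" for x
    using bounded_linear.Cauchy[OF blinfun.bounded_linear_left assms] .
  then obtain v where v: "\<And>x. (\<lambda>n. X n x) \<longlonglongrightarrow> v x"
    unfolding Cauchy_convergent_iff convergent_def by metis
  obtain K where K: "\<And>n. norm (X n) \<le> K"
    using Cauchy_Bseq[OF assms] by (auto simp: Bseq_iff)
  have "bounded_linear v"
  proof
    fix x y :: 'a and r :: real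
    have "(\<lambda>n. X n (x + y)) \<longlonglongrightarrow> v x + v y"
      using tendsto_add[OF v[of x] v[of y]] by (simp add: blinfun.add_right)
    then show "v (x + y) = v x + v y"
      using v LIMSEQ_unique by blast
    have "(\<lambda>n. X n (r *\<^sub>R x)) \<longlonglongrightarrow> r *\<^sub>R v x"
      using tendsto_scaleR[OF tendsto_const v[of x]] by (simp add: blinfun.scaleR_right)
    then show "v (r *\<^sub>R x) = r *\<^sub>R v x"
      using v LIMSEQ_unique by blast
    show "\<exists>K. \<forall>x. norm (v x) \<le> norm x * K"
    proof (intro exI allI)
      fix x
      have "norm (X n x) \<le> norm x * K" for n
        using norm_blinfun[of "X n" x] mult_left_mono[OF K[of n] norm_ge_zero[of x]]
        by (simp add: mult.commute)
      then show "norm (v x) \<le> norm x * K"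
        by (intro tendsto_upperbound[OF tendsto_norm[OF v]]) auto
    qed
  qed
  with v that show ?thesis
    by blast
qed

text \<open>The library's instance \<open>blinfun :: (real_normed_vector, banach) banach\<close> needs the
  codomain in class \<open>banach\<close>, which the sort \<open>{real_normed_vector, complete_space}\<close> of the
  theorem does not provide.\<close>

lemma blinfun_Cauchy_convergent:
  fixes X :: "nat \<Rightarrow> 'a::real_normed_vector \<Rightarrow>\<^sub>L 'b::{real_normed_vector,complete_space}"
  assumes "Cauchy X"
  shows "convergent X"
proof -
  obtain v where "bounded_linear v" and v: "\<And>x. (\<lambda>n. X n x) \<longlonglongrightarrow> v x"
    using blinfun_Cauchy_pointwise_limit[OF assms] by blast
  have "X \<longlonglongrightarrow> Blinfun v"
  proof (rule LIMSEQ_I)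
    fix e :: real
    assume "e > 0"
    then obtain M where M: "\<And>m n. m \<ge> M \<Longrightarrow> n \<ge> M \<Longrightarrow> norm (X m - X n) < e / 2"
      using CauchyD[OF assms, of "e / 2"] by auto
    have "norm (X n - Blinfun v) \<le> e / 2" if n: "n \<ge> M" for n
    proof (rule norm_blinfun_bound)
      fix x
      have "norm (X n x - X m x) \<le> e / 2 * norm x" if "m \<ge> M" for m
        using norm_blinfun[of "X n - X m" x] mult_right_mono[OF less_imp_le[OF M[OF n that]], of "norm x"]
        by (simp add: blinfun.diff_left)
      then have "eventually (\<lambda>m. norm (X n x - X m x) \<le> e / 2 * norm x) sequentially"
        by (auto simp: eventually_sequentially)
      moreover have "(\<lambda>m. norm (X n x - X m x)) \<longlonglongrightarrow> norm (X n x - v x)"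
        by (intro tendsto_intros v)
      ultimately have "norm (X n x - v x) \<le> e / 2 * norm x"
        by (intro tendsto_upperbound) auto
      then show "norm ((X n - Blinfun v) x) \<le> e / 2 * norm x"
        by (simp add: blinfun.diff_left bounded_linear_Blinfun_apply[OF \<open>bounded_linear v\<close>])
    qed (use \<open>e > 0\<close> in simp)
    then show "\<exists>M. \<forall>n\<ge>M. norm (X n - Blinfun v) < e"
      using \<open>e > 0\<close> by force
  qed
  then show ?thesis
    by (rule convergentI)
qed

section \<open>The unitization of the bounded operators\<close>

text \<open>\<open>Unitize X c\<close> stands for \<open>X + c \<cdot> id\<close>. The algebra \<open>'a \<Rightarrow>\<^sub>L 'a\<close> is not an instance of
  \<open>real_normed_algebra_1\<close> (\<open>norm id_blinfun = 0\<close> on the trivial space), so operator exponentials are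
  taken in its unitization, normed by \<open>norm X + \<bar>c\<bar>\<close>; \<open>as_op\<close> maps it back to the operators.\<close>

context notes [[typedef_overloaded]] begin

datatype ('a::real_normed_vector) unitization =
  Unitize (op_part: "'a \<Rightarrow>\<^sub>L 'a") (unit_part: real)

end

lemma unitization_eq_iff: "u = v \<longleftrightarrow> op_part u = op_part v \<and> unit_part u = unit_part v"
  by (cases u; cases v) simp

instantiation unitization :: (real_normed_vector) real_normed_algebra_1
begin

definition "0 = Unitize 0 0"
definition "1 = Unitize 0 1"
definition "u + v = Unitize (op_part u + op_part v) (unit_part u + unit_part v)"
definition "u - v = Unitize (op_part u - op_part v) (unit_part u - unit_part v)"
definition "- u = Unitize (- op_part u) (- unit_part u)"
definition "scaleR r u = Unitize (r *\<^sub>R op_part u) (r * unit_part u)"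
definition "u * v = Unitize ((op_part u o\<^sub>L op_part v) + unit_part u *\<^sub>R op_part v
    + unit_part v *\<^sub>R op_part u) (unit_part u * unit_part v)"
definition "norm u = norm (op_part u) + \<bar>unit_part u\<bar>"
definition "sgn (u::'a unitization) = inverse (norm u) *\<^sub>R u"
definition "dist (u::'a unitization) v = norm (u - v)"
definition "(uniformity :: ('a unitization \<times> 'a unitization) filter) =
    (INF e\<in>{0 <..}. principal {(x, y). dist x y < e})"
definition "open (S :: 'a unitization set) =
    (\<forall>x\<in>S. \<forall>\<^sub>F (x', y) in uniformity. x' = x \<longrightarrow> y \<in> S)"

instance
proof
  fix a b c :: "'a unitization" and r s :: real
  show "a + b + c = a + (b + c)" "a + b = b + a" "0 + a = a" "- a + a = 0" "a - b = a + - b"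
    by (simp_all add: unitization_eq_iff plus_unitization_def zero_unitization_def
        uminus_unitization_def minus_unitization_def)
  show "r *\<^sub>R (a + b) = r *\<^sub>R a + r *\<^sub>R b" "(r + s) *\<^sub>R a = r *\<^sub>R a + s *\<^sub>R a"
    "r *\<^sub>R s *\<^sub>R a = (r * s) *\<^sub>R a" "1 *\<^sub>R a = a"
    by (simp_all add: unitization_eq_iff plus_unitization_def scaleR_unitization_def algebra_simps)
  show "a * b * c = a * (b * c)"
    by (auto intro!: blinfun_eqI simp: unitization_eq_iff times_unitization_def
        blinfun.bilinear_simps scaleR_add_right mult.commute mult.left_commute)
  show "(a + b) * c = a * c + b * c"
    by (auto intro!: blinfun_eqI simp: unitization_eq_iff times_unitization_def plus_unitization_def
        blinfun.bilinear_simps scaleR_add_right scaleR_add_left distrib_right)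
  show "a * (b + c) = a * b + a * c"
    by (auto intro!: blinfun_eqI simp: unitization_eq_iff times_unitization_def plus_unitization_def
        blinfun.bilinear_simps scaleR_add_right scaleR_add_left distrib_left)
  show "r *\<^sub>R a * b = r *\<^sub>R (a * b)" "a * r *\<^sub>R b = r *\<^sub>R (a * b)"
    by (auto intro!: blinfun_eqI simp: unitization_eq_iff times_unitization_def scaleR_unitization_def
        blinfun.bilinear_simps scaleR_add_right mult.commute mult.left_commute)
  show "1 * a = a" "a * 1 = a" "(0::'a unitization) \<noteq> 1" "norm (1::'a unitization) = 1"
    by (simp_all add: unitization_eq_iff times_unitization_def one_unitization_def
        zero_unitization_def norm_unitization_def)
  show "dist a b = norm (a - b)" "sgn a = inverse (norm a) *\<^sub>R a"
    "(uniformity :: ('a unitization \<times> 'a unitization) filter) =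
       (INF e\<in>{0 <..}. principal {(x, y). dist x y < e})"
    "\<And>S::'a unitization set. open S = (\<forall>x\<in>S. \<forall>\<^sub>F (x', y) in uniformity. x' = x \<longrightarrow> y \<in> S)"
    by (simp_all add: dist_unitization_def sgn_unitization_def uniformity_unitization_def
        open_unitization_def)
  show "(norm a = 0) = (a = 0)"
    by (simp add: norm_unitization_def unitization_eq_iff zero_unitization_def add_nonneg_eq_0_iff)
  show "norm (a + b) \<le> norm a + norm b"
    using norm_triangle_ineq[of "op_part a" "op_part b"] abs_triangle_ineq[of "unit_part a" "unit_part b"]
    by (simp add: norm_unitization_def plus_unitization_def)
  show "norm (r *\<^sub>R a) = \<bar>r\<bar> * norm a"
    by (simp add: norm_unitization_def scaleR_unitization_def abs_mult algebra_simps)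
  have "norm ((op_part a o\<^sub>L op_part b) + unit_part a *\<^sub>R op_part b + unit_part b *\<^sub>R op_part a)
     \<le> norm (op_part a) * norm (op_part b) + \<bar>unit_part a\<bar> * norm (op_part b)
       + \<bar>unit_part b\<bar> * norm (op_part a)"
    by (smt (verit) norm_blinfun_compose norm_scaleR norm_triangle_ineq)
  then show "norm (a * b) \<le> norm a * norm b"
    by (simp add: norm_unitization_def times_unitization_def abs_mult algebra_simps)
qed

end

lemma op_part_simps [simp]:
  "op_part (u + v) = op_part u + op_part v" "op_part (u - v) = op_part u - op_part v"
  "op_part (- u) = - op_part u" "op_part (r *\<^sub>R u) = r *\<^sub>R op_part u"
  "op_part 0 = 0" "op_part 1 = 0"
  "op_part (u * v) = (op_part u o\<^sub>L op_part v) + unit_part u *\<^sub>R op_part v + unit_part v *\<^sub>R op_part u"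
  by (simp_all add: plus_unitization_def minus_unitization_def uminus_unitization_def
      scaleR_unitization_def zero_unitization_def one_unitization_def times_unitization_def)

lemma unit_part_simps [simp]:
  "unit_part (u + v) = unit_part u + unit_part v" "unit_part (u - v) = unit_part u - unit_part v"
  "unit_part (- u) = - unit_part u" "unit_part (r *\<^sub>R u) = r * unit_part u"
  "unit_part 0 = 0" "unit_part 1 = 1" "unit_part (u * v) = unit_part u * unit_part v"
  by (simp_all add: plus_unitization_def minus_unitization_def uminus_unitization_def
      scaleR_unitization_def zero_unitization_def one_unitization_def times_unitization_def)

lemma bounded_linear_op_part: "bounded_linear op_part"
  by (rule bounded_linear_intro[where K=1]) (auto simp: norm_unitization_def)

lemma bounded_linear_unit_part: "bounded_linear unit_part"
  by (rule bounded_linear_intro[where K=1]) (auto simp: norm_unitization_def)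

instance unitization :: ("{real_normed_vector,complete_space}") banach
proof
  fix u :: "nat \<Rightarrow> 'a unitization"
  assume u: "Cauchy u"
  obtain X where X: "(\<lambda>n. op_part (u n)) \<longlonglongrightarrow> X"
    using blinfun_Cauchy_convergent[OF bounded_linear.Cauchy[OF bounded_linear_op_part u]]
    unfolding convergent_def by blast
  obtain c where c: "(\<lambda>n. unit_part (u n)) \<longlonglongrightarrow> c"
    using bounded_linear.Cauchy[OF bounded_linear_unit_part u]
    unfolding Cauchy_convergent_iff convergent_def by blast
  have "(\<lambda>n. norm (op_part (u n) - X) + \<bar>unit_part (u n) - c\<bar>) \<longlonglongrightarrow> 0 + 0"
    using X c by (intro tendsto_add) (simp_all add: tendsto_norm_zero_iff tendsto_rabs_zero_iff LIM_zero_iff)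
  then have "(\<lambda>n. norm (u n - Unitize X c)) \<longlonglongrightarrow> 0"
    by (simp add: norm_unitization_def)
  then have "u \<longlonglongrightarrow> Unitize X c"
    by (simp add: tendsto_norm_zero_iff LIM_zero_iff)
  then show "convergent u"
    by (auto simp: convergent_def)
qed

definition as_op :: "'a::real_normed_vector unitization \<Rightarrow> 'a \<Rightarrow>\<^sub>L 'a" where
  "as_op u = op_part u + unit_part u *\<^sub>R id_blinfun"

definition of_op :: "('a::real_normed_vector \<Rightarrow>\<^sub>L 'a) \<Rightarrow> 'a unitization" where
  "of_op X = Unitize X 0"

lemma as_op_apply: "as_op u x = op_part u x + unit_part u *\<^sub>R x"
  by (simp add: as_op_def blinfun.bilinear_simps)

lemma as_op_of_op [simp]: "as_op (of_op X) = X"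
  by (simp add: as_op_def of_op_def)

lemma as_op_one [simp]: "as_op 1 = id_blinfun"
  by (simp add: as_op_def)

lemma of_op_mult: "of_op X * of_op Y = of_op (X o\<^sub>L Y)"
  by (simp add: of_op_def times_unitization_def)

lemma as_op_mult: "as_op (u * v) = as_op u o\<^sub>L as_op v"
  by (auto intro!: blinfun_eqI simp: as_op_apply blinfun.bilinear_simps scaleR_add_right)

lemma as_op_add: "as_op (u + v) = as_op u + as_op v"
  and as_op_diff: "as_op (u - v) = as_op u - as_op v"
  and as_op_minus: "as_op (- u) = - as_op u"
  and as_op_scaleR: "as_op (r *\<^sub>R u) = r *\<^sub>R as_op u"
  by (auto intro!: blinfun_eqI simp: as_op_apply blinfun.bilinear_simps algebra_simps)

lemma norm_as_op_le: "norm (as_op u) \<le> norm u"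
proof -
  have "norm (as_op u) \<le> norm (op_part u) + norm (unit_part u *\<^sub>R (id_blinfun :: 'a \<Rightarrow>\<^sub>L 'a))"
    unfolding as_op_def by (rule norm_triangle_ineq)
  also have "\<dots> \<le> norm u"
    using norm_blinfun_id_le[where 'a='a] by (simp add: norm_unitization_def mult_left_le)
  finally show ?thesis .
qed

lemma bounded_linear_as_op: "bounded_linear as_op"
  by (rule bounded_linear_intro[where K=1]) (auto simp: as_op_add as_op_scaleR norm_as_op_le)

lemma norm_as_op_apply_le: "norm (as_op u x) \<le> norm u * norm x"
  using norm_blinfun[of "as_op u" x] mult_right_mono[OF norm_as_op_le norm_ge_zero]
  by (rule order_trans)

section \<open>Exponentials in Banach algebras\<close>

definition commuting :: "'a::times \<Rightarrow> 'a \<Rightarrow> bool" where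
  "commuting x y \<longleftrightarrow> x * y = y * x"

lemma commuting_intros:
  fixes x y z :: "'a::real_algebra_1"
  shows "commuting x x" "commuting x 1" "commuting 1 x"
    "commuting x y \<Longrightarrow> commuting x z \<Longrightarrow> commuting x (y + z)"
    "commuting y x \<Longrightarrow> commuting z x \<Longrightarrow> commuting (y + z) x"
    "commuting x y \<Longrightarrow> commuting x z \<Longrightarrow> commuting x (y - z)"
    "commuting y x \<Longrightarrow> commuting z x \<Longrightarrow> commuting (y - z) x"
    "commuting x y \<Longrightarrow> commuting x (- y)" "commuting y x \<Longrightarrow> commuting (- y) x"
    "commuting x y \<Longrightarrow> commuting x (r *\<^sub>R y)" "commuting y x \<Longrightarrow> commuting (r *\<^sub>R y) x"
  by (simp_all add: commuting_def algebra_simps)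

lemma commuting_mult:
  fixes x y z :: "'a::semigroup_mult"
  shows "commuting x y \<Longrightarrow> commuting x z \<Longrightarrow> commuting x (y * z)"
    "commuting y x \<Longrightarrow> commuting z x \<Longrightarrow> commuting (y * z) x"
  unfolding commuting_def by (metis mult.assoc)+

lemma commuting_of_op:
  fixes X Y :: "'a::real_normed_vector \<Rightarrow>\<^sub>L 'a"
  assumes "\<And>x. X (Y x) = Y (X x)"
  shows "commuting (of_op X) (of_op Y)"
  using assms by (auto simp: commuting_def of_op_mult intro!: arg_cong[where f=of_op] blinfun_eqI)

lemma exp_commute:
  fixes x y :: "'a::{real_normed_algebra_1,banach}"
  assumes "x * y = y * x"
  shows "x * exp y = exp y * x"
proof -
  have "(\<lambda>n. x * (y ^ n /\<^sub>R fact n)) sums (x * exp y)"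
    by (intro sums_mult exp_converges)
  moreover have "(\<lambda>n. (y ^ n /\<^sub>R fact n) * x) sums (exp y * x)"
    by (intro sums_mult2 exp_converges)
  moreover have "(\<lambda>n. x * (y ^ n /\<^sub>R fact n)) = (\<lambda>n. (y ^ n /\<^sub>R fact n) * x)"
    using power_commuting_commutes[of y x] assms by simp
  ultimately show ?thesis
    by (metis sums_unique2)
qed

lemma commuting_exp:
  fixes x y :: "'a::{real_normed_algebra_1,banach}"
  shows "commuting x y \<Longrightarrow> commuting x (exp y)" "commuting y x \<Longrightarrow> commuting (exp y) x"
  by (simp_all add: commuting_def exp_commute)

lemma norm_exp_sub_one_sub_le:
  fixes z :: "'a::{real_normed_algebra_1,banach}"
  shows "norm (exp z - 1 - z) \<le> norm z ^ 2 * exp (norm z)"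
proof -
  define f where "f n = z ^ n /\<^sub>R fact n" for n
  have "f sums exp z"
    unfolding f_def by (rule exp_converges)
  then have tail: "(\<lambda>n. f (Suc (Suc n))) sums (exp z - 1 - z)"
    by (subst sums_Suc_iff, subst sums_Suc_iff) (simp add: f_def)
  have term_le: "norm (f (Suc (Suc n))) \<le> norm z ^ 2 * (norm z ^ n /\<^sub>R fact n)" for n
  proof -
    have "norm (f (Suc (Suc n))) \<le> norm z ^ Suc (Suc n) / fact (Suc (Suc n))"
      unfolding f_def norm_scaleR
      by (simp add: divide_inverse norm_power_ineq mult_right_mono del: fact_Suc power_Suc)
    also have "\<dots> \<le> norm z ^ Suc (Suc n) / fact n"
      by (intro divide_left_mono fact_mono) auto
    also have "\<dots> = norm z ^ 2 * (norm z ^ n /\<^sub>R fact n)"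
      by (simp add: power2_eq_square divide_inverse)
    finally show ?thesis .
  qed
  have majorant: "(\<lambda>n. norm z ^ 2 * (norm z ^ n /\<^sub>R fact n)) sums (norm z ^ 2 * exp (norm z))"
    by (intro sums_mult exp_converges)
  have summable: "summable (\<lambda>n. norm (f (Suc (Suc n))))"
    by (rule summable_comparison_test[OF _ sums_summable[OF majorant]]) (use term_le in auto)
  have "norm (exp z - 1 - z) \<le> (\<Sum>n. norm (f (Suc (Suc n))))"
    using summable_norm[OF summable] sums_unique[OF tail] by simp
  also have "\<dots> \<le> norm z ^ 2 * exp (norm z)"
    using suminf_le[OF term_le summable sums_summable[OF majorant]] sums_unique[OF majorant] by simp
  finally show ?thesis .
qed

lemma norm_exp_conj_sub_commutator_le:
  fixes G Z :: "'a::{real_normed_algebra_1,banach}"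
  assumes "norm Z \<le> c"
  shows "norm (exp (- Z) * G * exp Z - G - (G * Z - Z * G))
    \<le> norm Z ^ 2 * (norm G * (exp c + 1 + c * exp c + exp c * exp c))"
proof -
  define m g where "m = norm Z" and "g = norm G"
  have m0: "0 \<le> m" and g0: "0 \<le> g" and mc: "m \<le> c"
    using assms by (simp_all add: m_def g_def)
  have m2: "m^2 * exp m \<le> m^2 * exp c"
    using mc by (intro mult_left_mono) simp_all
  have R: "norm (exp Z - 1 - Z) \<le> m^2 * exp c" "norm (exp (- Z) - 1 - (- Z)) \<le> m^2 * exp c"
    using norm_exp_sub_one_sub_le[of Z] norm_exp_sub_one_sub_le[of "- Z"] m2 by (simp_all add: m_def)
  have R1: "norm (exp Z - 1) \<le> m + m^2 * exp c"
    using norm_triangle_ineq[of Z "exp Z - 1 - Z"] R(1) by (simp add: m_def)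
  have E: "norm (exp Z) \<le> exp c"
    using norm_exp[of Z] mc by (simp add: m_def order_trans)
  \<comment> \<open>Expand both exponentials to second order; the first-order terms give the commutator.\<close>
  have "exp (- Z) * G * exp Z - G - (G * Z - Z * G)
      = G * (exp Z - 1 - Z) - Z * G * (exp Z - 1) + (exp (- Z) - 1 - (- Z)) * G * exp Z"
    by (simp add: algebra_simps)
  also have "norm \<dots> \<le> g * (m^2 * exp c) + m * g * (m + m^2 * exp c) + (m^2 * exp c) * g * exp c"
  proof (intro order_trans[OF norm_triangle_ineq] order_trans[OF add_mono[OF norm_triangle_ineq4 order_refl]]
      add_mono)
    show "norm (G * (exp Z - 1 - Z)) \<le> g * (m^2 * exp c)"
      using norm_mult_ineq[of G] mult_left_mono[OF R(1) g0] unfolding g_def by (rule order_trans)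
    show "norm (Z * G * (exp Z - 1)) \<le> m * g * (m + m^2 * exp c)"
      using norm_mult_ineq[of "Z * G"] norm_mult_ineq[of Z G] R1 m0 g0
      by (smt (verit, best) g_def m_def mult_mono norm_ge_zero)
    show "norm ((exp (- Z) - 1 - (- Z)) * G * exp Z) \<le> m^2 * exp c * g * exp c"
      using norm_mult_ineq[of "(exp (- Z) - 1 - (- Z)) * G"] norm_mult_ineq[of "exp (- Z) - 1 - (- Z)" G]
        R(2) E g0
      by (smt (verit, best) g_def mult_mono norm_ge_zero zero_le_mult_iff)
  qed
  also have "\<dots> \<le> m^2 * (g * (exp c + 1 + c * exp c + exp c * exp c))"
  proof -
    have "m * (m^2 * exp c * g) \<le> c * (m^2 * exp c * g)"
      using mc g0 by (intro mult_right_mono) simp_all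
    then have "m * g * (m + m^2 * exp c) \<le> m^2 * (g * (1 + c * exp c))"
      by (simp add: power2_eq_square algebra_simps)
    then show ?thesis by (simp add: algebra_simps)
  qed
  finally show ?thesis by (simp add: m_def g_def)
qed

lemma norm_as_op_exp_skew:
  fixes Z :: "'a::{real_inner,complete_space} unitization"
  assumes skew: "\<And>u. inner (as_op Z u) u = 0"
  shows "norm (as_op (exp Z) x) = norm x"
proof -
  define g where "g t = as_op (exp (t *\<^sub>R Z)) x" for t
  have blp: "bounded_linear (\<lambda>w. as_op w x)"
    by (rule bounded_linear_compose[OF blinfun.bounded_linear_left bounded_linear_as_op])
  have g': "(g has_vector_derivative as_op Z (g t)) (at t)" for t
  proof -
    have "(g has_vector_derivative as_op (Z * exp (t *\<^sub>R Z)) x) (at t)"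
      unfolding g_def by (rule bounded_linear.has_vector_derivative[OF blp exp_scaleR_has_vector_derivative_left])
    then show ?thesis by (simp add: g_def as_op_mult)
  qed
  have "((\<lambda>t. inner (g t) (g t)) has_real_derivative 0) (at t)" for t
    using bounded_bilinear.has_vector_derivative[OF bounded_bilinear_inner g' g', of t] skew[of "g t"]
    by (simp add: has_real_derivative_iff_has_vector_derivative inner_commute)
  then have "inner (g 1) (g 1) = inner (g 0) (g 0)"
    by (intro DERIV_isconst_all allI)
  then show ?thesis
    by (simp add: g_def norm_eq_sqrt_inner)
qed

section \<open>Orthogonal projection, Riesz representation and adjoints\<close>

lemma zero_if_linear_le_quadratic:
  fixes s q :: real
  assumes "\<And>t. 2 * t * s \<le> t^2 * q" and "q \<ge> 0"
  shows "s = 0"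
proof -
  define t where "t = s / (q + 1)"
  have s_eq: "s = t * (q + 1)"
    using \<open>q \<ge> 0\<close> by (simp add: t_def)
  have "2 * t * (t * (q + 1)) \<le> t^2 * q"
    using assms(1)[of t] s_eq by simp
  then have "t^2 * (q + 2) \<le> 0"
    by (simp add: power2_eq_square algebra_simps)
  then have "t = 0"
    using \<open>q \<ge> 0\<close> by (simp add: mult_le_0_iff)
  then show ?thesis
    using s_eq by simp
qed

lemma parallelogram_law:
  fixes a b :: "'a::real_inner"
  shows "norm (a - b) ^ 2 + norm (a + b) ^ 2 = 2 * norm a ^ 2 + 2 * norm b ^ 2"
  by (simp add: power2_norm_eq_inner inner_add_left inner_add_right inner_diff_left
      inner_diff_right inner_commute)

lemma minimizing_sequence_dist_le:
  fixes x :: "'a::real_inner"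
  assumes "convex K" and k: "\<And>n. k n \<in> K"
    and d: "\<And>y. y \<in> K \<Longrightarrow> d \<le> norm (x - y) ^ 2"
    and k_d: "\<And>n. norm (x - k n) ^ 2 < d + 1 / Suc n"
  shows "norm (k n - k m) ^ 2 \<le> 2 / Suc n + 2 / Suc m"
proof -
  have "(1/2) *\<^sub>R k n + (1/2) *\<^sub>R k m \<in> K"
    using convexD[OF \<open>convex K\<close> k k] by simp
  then have "d \<le> norm (x - ((1/2) *\<^sub>R k n + (1/2) *\<^sub>R k m)) ^ 2"
    by (rule d)
  moreover have "norm ((x - k n) + (x - k m)) ^ 2 = 4 * norm (x - ((1/2) *\<^sub>R k n + (1/2) *\<^sub>R k m)) ^ 2"
  proof -
    have "(x - k n) + (x - k m) = 2 *\<^sub>R (x - ((1/2) *\<^sub>R k n + (1/2) *\<^sub>R k m))"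
      by (simp add: algebra_simps scaleR_2)
    then show ?thesis
      by (simp add: power2_eq_square)
  qed
  moreover have "norm (k n - k m) ^ 2 + norm ((x - k n) + (x - k m)) ^ 2
      = 2 * norm (x - k n) ^ 2 + 2 * norm (x - k m) ^ 2"
    using parallelogram_law[of "x - k n" "x - k m"] by (simp add: norm_minus_commute)
  ultimately show ?thesis
    using k_d[of n] k_d[of m] by linarith
qed

lemma minimizing_sequence_Cauchy:
  fixes x :: "'a::real_inner"
  assumes "convex K" "\<And>n. k n \<in> K" "\<And>y. y \<in> K \<Longrightarrow> d \<le> norm (x - y) ^ 2"
    and "\<And>n. norm (x - k n) ^ 2 < d + 1 / Suc n"
  shows "Cauchy k"
proof (rule metric_CauchyI)
  fix e :: real
  assume "e > 0"
  obtain N :: nat where N: "4 / e^2 < N"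
    using reals_Archimedean2 by blast
  moreover have "0 < 4 / e^2"
    using \<open>e > 0\<close> by simp
  ultimately have "N > 0"
    by linarith
  show "\<exists>M. \<forall>m\<ge>M. \<forall>n\<ge>M. dist (k m) (k n) < e"
  proof (intro exI allI impI)
    fix m n assume "N \<le> m" "N \<le> n"
    then have "2 / real (Suc m) \<le> 2 / N" "2 / real (Suc n) \<le> 2 / N"
      using \<open>N > 0\<close> by (auto intro!: divide_left_mono)
    moreover have "4 / real N < e ^ 2"
      using N \<open>N > 0\<close> \<open>e > 0\<close> by (simp add: field_simps)
    ultimately have "norm (k m - k n) ^ 2 < e ^ 2"
      using minimizing_sequence_dist_le[OF assms, of m n] by linarith
    then show "dist (k m) (k n) < e"
      using \<open>e > 0\<close> by (simp add: dist_norm power_less_imp_less_base)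
  qed
qed

lemma exists_nearest_point_convex:
  fixes x :: "'a::{real_inner,complete_space}"
  assumes "closed K" "convex K" "K \<noteq> {}"
  shows "\<exists>p\<in>K. \<forall>y\<in>K. norm (x - p) ^ 2 \<le> norm (x - y) ^ 2"
proof -
  define d where "d = (INF y\<in>K. norm (x - y) ^ 2)"
  have bdd: "bdd_below ((\<lambda>y. norm (x - y) ^ 2) ` K)"
    by (rule bdd_belowI2[where m=0]) simp
  have d: "d \<le> norm (x - y) ^ 2" if "y \<in> K" for y
    unfolding d_def using cINF_lower[OF bdd that] .
  have "\<exists>y\<in>K. norm (x - y) ^ 2 < d + 1 / Suc n" for n
    using cINF_less_iff[OF \<open>K \<noteq> {}\<close> bdd, of "d + 1 / Suc n"] \<open>K \<noteq> {}\<close> by (simp add: d_def)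
  then obtain k where k: "\<And>n. k n \<in> K" and k_d: "\<And>n. norm (x - k n) ^ 2 < d + 1 / Suc n"
    by metis
  obtain p where p: "k \<longlonglongrightarrow> p"
    using minimizing_sequence_Cauchy[OF \<open>convex K\<close> k d k_d]
    unfolding Cauchy_convergent_iff convergent_def by blast
  have "p \<in> K"
    using closed_sequentially[OF \<open>closed K\<close>] k p by blast
  moreover have "norm (x - p) ^ 2 \<le> d"
  proof (rule LIMSEQ_le)
    show "(\<lambda>n. norm (x - k n) ^ 2) \<longlonglongrightarrow> norm (x - p) ^ 2"
      by (intro tendsto_intros p)
    show "(\<lambda>n. d + 1 / Suc n) \<longlonglongrightarrow> d"
      using tendsto_add[OF tendsto_const LIMSEQ_inverse_real_of_nat, of d]
      by (simp add: inverse_eq_divide)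
  qed (use k_d less_imp_le in blast)
  ultimately show ?thesis
    using d order_trans by blast
qed

lemma orthogonal_projection_exists:
  fixes x :: "'a::{real_inner,complete_space}"
  assumes "subspace K" "closed K"
  shows "\<exists>p\<in>K. \<forall>y\<in>K. inner (x - p) y = 0"
proof -
  obtain p where "p \<in> K" and p: "\<And>y. y \<in> K \<Longrightarrow> norm (x - p) ^ 2 \<le> norm (x - y) ^ 2"
    using exists_nearest_point_convex[OF \<open>closed K\<close> subspace_imp_convex[OF \<open>subspace K\<close>]]
      subspace_0[OF \<open>subspace K\<close>] by blast
  have "inner (x - p) y = 0" if "y \<in> K" for y
  proof (rule zero_if_linear_le_quadratic)
    fix t :: real
    have "p + t *\<^sub>R y \<in> K"
      using \<open>p \<in> K\<close> \<open>y \<in> K\<close> \<open>subspace K\<close> by (simp add: subspace_add subspace_mul)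
    then have "norm (x - p) ^ 2 \<le> norm (x - (p + t *\<^sub>R y)) ^ 2"
      by (rule p)
    also have "norm (x - (p + t *\<^sub>R y)) ^ 2 = norm (x - p) ^ 2 - 2 * t * inner (x - p) y + t^2 * inner y y"
      unfolding power2_norm_eq_inner
      by (simp add: inner_diff_left inner_diff_right inner_add_left inner_add_right inner_commute
          power2_eq_square algebra_simps)
    finally show "2 * t * inner (x - p) y \<le> t^2 * inner y y"
      by simp
  qed simp
  with \<open>p \<in> K\<close> show ?thesis by blast
qed

lemma riesz_representation:
  fixes f :: "'a::{real_inner,complete_space} \<Rightarrow> real"
  assumes "bounded_linear f"
  shows "\<exists>z. \<forall>x. f x = inner z x"
proof (cases "\<forall>x. f x = 0")
  case True
  then show ?thesis by (intro exI[of _ 0]) simp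
next
  case False
  then obtain x0 where "f x0 \<noteq> 0" by blast
  interpret f: bounded_linear f by (rule assms)
  have "subspace {x. f x = 0}"
    by (auto simp: subspace_def f.add f.scaleR)
  moreover have "closed {x. f x = 0}"
    by (intro closed_Collect_eq continuous_on_id continuous_on_const f.continuous_on)
  ultimately obtain p where "f p = 0" and orth: "\<And>y. f y = 0 \<Longrightarrow> inner (x0 - p) y = 0"
    using orthogonal_projection_exists[of "{x. f x = 0}" x0] by auto
  define w where "w = x0 - p"
  have "f w \<noteq> 0" "inner w w \<noteq> 0"
    using \<open>f x0 \<noteq> 0\<close> \<open>f p = 0\<close> by (auto simp: w_def f.diff)
  show ?thesis
  proof (intro exI allI)
    fix x
    \<comment> \<open>\<open>f x *\<^sub>R w - f w *\<^sub>R x\<close> lies in the kernel, hence is orthogonal to \<open>w\<close>.\<close>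
    have "inner w (f x *\<^sub>R w - f w *\<^sub>R x) = 0"
      using orth[of "f x *\<^sub>R w - f w *\<^sub>R x"] by (simp add: w_def f.diff f.scaleR)
    then show "f x = inner ((f w / inner w w) *\<^sub>R w) x"
      using \<open>inner w w \<noteq> 0\<close> by (simp add: inner_diff_right field_simps)
  qed
qed

lemma norm_adjoint_apply_le:
  fixes A B :: "'a::real_inner \<Rightarrow> 'a"
  assumes "bounded_linear A" and adj: "\<And>x y. inner (A x) y = inner x (B y)"
  shows "norm (B y) \<le> onorm A * norm y"
proof (cases "B y = 0")
  case True
  then show ?thesis by (simp add: onorm_pos_le[OF assms(1)])
next
  case False
  have "norm (B y) ^ 2 = inner (A (B y)) y"
    by (simp add: adj power2_norm_eq_inner)
  also have "\<dots> \<le> norm (A (B y)) * norm y"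
    by (rule norm_cauchy_schwarz)
  also have "\<dots> \<le> onorm A * norm (B y) * norm y"
    using onorm[OF assms(1)] by (simp add: mult_right_mono)
  finally show ?thesis
    using False by (simp add: power2_eq_square mult_ac)
qed

lemma adjoint_exists:
  fixes A :: "'a::{real_inner,complete_space} \<Rightarrow> 'a"
  assumes "bounded_linear A"
  shows "\<exists>B. bounded_linear B \<and> (\<forall>x y. inner (A x) y = inner x (B y))"
proof -
  interpret A: bounded_linear A by (rule assms)
  have "\<exists>z. \<forall>x. inner (A x) y = inner z x" for y
    by (rule riesz_representation) (intro bounded_linear_inner_left_comp assms)
  then obtain B where "\<And>x y. inner (A x) y = inner (B y) x"
    by metis
  then have adj: "inner (A x) y = inner x (B y)" for x y
    by (simp add: inner_commute)
  have "bounded_linear B"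
  proof (rule bounded_linear_intro)
    show "B (y + z) = B y + B z" "B (r *\<^sub>R y) = r *\<^sub>R B y" for y z r
      by (rule vector_eq_ldot[THEN iffD1], simp add: adj[symmetric] inner_add_right)+
    show "norm (B y) \<le> norm y * onorm A" for y
      using norm_adjoint_apply_le[OF assms adj] by (simp add: mult.commute)
  qed
  with adj show ?thesis by blast
qed

lemma hadjoint_eqI:
  fixes A B :: "'a::real_inner \<Rightarrow> 'a"
  assumes "\<And>x y. inner (A x) y = inner x (B y)"
  shows "hadjoint A = B"
  unfolding hadjoint_def
proof (rule the_equality)
  fix C
  assume C: "\<forall>x y. inner (A x) y = inner x (C y)"
  show "C = B"
  proof
    show "C y = B y" for y
      by (rule vector_eq_ldot[THEN iffD1]) (use C assms in metis)
  qed
qed (use assms in blast)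

lemma
  fixes A :: "'a::{real_inner,complete_space} \<Rightarrow> 'a"
  assumes "bounded_linear A"
  shows bounded_linear_hadjoint: "bounded_linear (hadjoint A)"
    and inner_hadjoint: "inner (A x) y = inner x (hadjoint A y)"
proof -
  obtain B where "bounded_linear B" and adj: "\<And>x y. inner (A x) y = inner x (B y)"
    using adjoint_exists[OF assms] by blast
  moreover have "hadjoint A = B"
    using adj by (rule hadjoint_eqI)
  ultimately show "bounded_linear (hadjoint A)" "inner (A x) y = inner x (hadjoint A y)"
    by simp_all
qed

section \<open>Fuglede's theorem\<close>

lemma has_field_derivative_quadratic_remainder:
  fixes f :: "complex \<Rightarrow> complex"
  assumes "\<And>w. norm w \<le> 1 \<Longrightarrow> norm (f (z + w) - f z - w * c) \<le> K * norm w ^ 2"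
  shows "(f has_field_derivative c) (at z)"
proof -
  have "\<forall>\<^sub>F y in at z. norm ((f y - f z) / (y - z) - c) \<le> K * norm (y - z)"
    unfolding eventually_at
  proof (intro exI[of _ 1] conjI ballI impI)
    fix y assume y: "y \<noteq> z \<and> dist y z < 1"
    have "(f y - f z) / (y - z) - c = (f (z + (y - z)) - f z - (y - z) * c) / (y - z)"
      using y by (simp add: field_simps)
    also have "norm \<dots> \<le> K * norm (y - z) ^ 2 / norm (y - z)"
      using assms[of "y - z"] y by (simp add: norm_divide dist_norm divide_right_mono)
    finally show "norm ((f y - f z) / (y - z) - c) \<le> K * norm (y - z)"
      using y by (simp add: power2_eq_square)
  qed simp
  moreover have "((\<lambda>y. K * norm (y - z)) \<longlongrightarrow> 0) (at z)"
    by (auto intro!: tendsto_eq_intros)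
  ultimately have "((\<lambda>y. (f y - f z) / (y - z) - c) \<longlongrightarrow> 0) (at z)"
    by (rule Lim_null_comparison)
  then show ?thesis
    by (simp add: has_field_derivative_iff LIM_zero_iff)
qed

locale fuglede_setting =
  fixes J A N :: "'a::{real_inner,complete_space} \<Rightarrow> 'a"
  assumes complex_structure: "complex_structure J"
    and clinear_A: "bounded_clinear_op J A"
    and normal_N: "normal_op J N"
    and A_N: "A \<circ> N = N \<circ> A"
begin

lemma J_J: "J (J x) = - x"
  and inner_J_J: "inner (J x) (J y) = inner x y"
  and linear_J: "linear J"
  using complex_structure by (auto simp: complex_structure_def)

lemma inner_J_left: "inner (J x) y = - inner x (J y)"
  using inner_J_J[of "J x" y] by (simp add: J_J)

lemma norm_J: "norm (J x) = norm x"
  by (simp add: norm_eq_sqrt_inner inner_J_J)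

lemma bounded_linear_J: "bounded_linear J"
  using linear_J by (auto intro: bounded_linear_intro[where K=1] simp: linear_add linear_scale norm_J)

lemma bounded_linear_A: "bounded_linear A"
  and A_J: "A (J x) = J (A x)"
  and bounded_linear_N: "bounded_linear N"
  and N_J: "N (J x) = J (N x)"
  and N_adj_N: "hadjoint N (N x) = N (hadjoint N x)"
  and A_N_apply: "A (N x) = N (A x)"
  using clinear_A normal_N A_N
  by (auto simp: bounded_clinear_op_def normal_op_def fun_eq_iff)

lemma bounded_linear_adj: "bounded_linear (hadjoint N)"
  and inner_adj: "inner (N x) y = inner x (hadjoint N y)"
  using bounded_linear_N by (rule bounded_linear_hadjoint, rule inner_hadjoint)

lemma adj_J: "hadjoint N (J x) = J (hadjoint N x)"
proof (rule vector_eq_ldot[THEN iffD1], intro allI)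
  fix z
  have "inner z (hadjoint N (J x)) = - inner (J (N z)) x"
    by (simp add: inner_adj[symmetric] inner_J_left)
  also have "\<dots> = inner z (J (hadjoint N x))"
    by (simp add: N_J[symmetric] inner_adj inner_J_left)
  finally show "inner z (hadjoint N (J x)) = inner z (J (hadjoint N x))" .
qed

definition "j = of_op (Blinfun J)"
definition "a = of_op (Blinfun A)"
definition "n = of_op (Blinfun N)"
definition "s = of_op (Blinfun (hadjoint N))"

lemma as_op_generators [simp]:
  "as_op j x = J x" "as_op a x = A x" "as_op n x = N x" "as_op s x = hadjoint N x"
  by (simp_all add: j_def a_def n_def s_def bounded_linear_Blinfun_apply bounded_linear_J
      bounded_linear_A bounded_linear_N bounded_linear_adj)

lemma commuting_generators:
  "commuting j a" "commuting a j" "commuting j n" "commuting n j" "commuting j s" "commuting s j"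
  "commuting n s" "commuting s n" "commuting a n" "commuting n a"
  unfolding j_def a_def n_def s_def
  by (intro commuting_of_op; simp add: bounded_linear_Blinfun_apply bounded_linear_J bounded_linear_A
      bounded_linear_N bounded_linear_adj A_J N_J adj_J N_adj_N A_N_apply)+

text \<open>Complex scalars act on the algebra through \<open>J\<close>, the multiplication by \<open>i\<close>.\<close>

definition scalar :: "complex \<Rightarrow> 'a unitization" where
  "scalar z = Re z *\<^sub>R 1 + Im z *\<^sub>R j"

lemma commuting_scalar:
  "commuting x j \<Longrightarrow> commuting x (scalar z)" "commuting j x \<Longrightarrow> commuting (scalar z) x"
  unfolding scalar_def commuting_def by (simp_all add: algebra_simps)

lemmas commuting_rules =
  commuting_intros commuting_mult commuting_exp commuting_scalar commuting_generators

lemma as_op_scalar: "as_op (scalar z) v = Re z *\<^sub>R v + Im z *\<^sub>R J v"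
  by (simp add: scalar_def as_op_add as_op_scaleR blinfun.bilinear_simps)

lemma scalar_add: "scalar (z + w) = scalar z + scalar w"
  by (simp add: scalar_def scaleR_add_left)

lemma scalar_0 [simp]: "scalar 0 = 0"
  by (simp add: scalar_def)

lemma norm_scalar_le: "norm (scalar w) \<le> norm w * (1 + norm j)"
proof -
  have "norm (scalar w) \<le> \<bar>Re w\<bar> + \<bar>Im w\<bar> * norm j"
    using norm_triangle_ineq[of "Re w *\<^sub>R (1::'a unitization)" "Im w *\<^sub>R j"] by (simp add: scalar_def)
  also have "\<dots> \<le> norm w + norm w * norm j"
    by (intro add_mono mult_right_mono abs_Re_le_cmod abs_Im_le_cmod) auto
  finally show ?thesis
    by (simp add: algebra_simps)
qed

definition cinner :: "'a \<Rightarrow> 'a \<Rightarrow> complex" where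
  "cinner u v = Complex (inner u v) (inner u (J v))"

lemma cinner_scalar: "cinner (as_op (scalar z) v) w = z * cinner v w"
  by (simp add: cinner_def as_op_scalar inner_add_left inner_J_left inner_J_J J_J complex_eq_iff
      algebra_simps)

lemma cinner_diff_left: "cinner (u - v) w = cinner u w - cinner v w"
  by (simp add: cinner_def inner_diff_left complex_eq_iff)

lemma Re_cinner: "Re (cinner u w) = inner u w"
  by (simp add: cinner_def)

lemma norm_cinner_le: "norm (cinner u w) \<le> 2 * (norm u * norm w)"
proof -
  have "norm (cinner u w) \<le> \<bar>inner u w\<bar> + \<bar>inner u (J w)\<bar>"
    using cmod_le[of "cinner u w"] by (simp add: cinner_def)
  also have "\<dots> \<le> norm u * norm w + norm u * norm (J w)"
    by (intro add_mono Cauchy_Schwarz_ineq2)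
  finally show ?thesis
    by (simp add: norm_J)
qed

definition rosenblum :: "complex \<Rightarrow> 'a unitization" where
  "rosenblum z = exp (- (scalar z * s)) * a * exp (scalar z * s)"

definition skew_exponent :: "complex \<Rightarrow> 'a unitization" where
  "skew_exponent z = scalar (cnj z) * n - scalar z * s"

lemma rosenblum_eq_skew_conj: "rosenblum z = exp (skew_exponent z) * a * exp (- skew_exponent z)"
proof -
  define W where "W = scalar (cnj z) * n"
  have c: "commuting (skew_exponent z) (- W)" "commuting W (- skew_exponent z)" "commuting a (- W)"
    unfolding skew_exponent_def W_def by (intro commuting_rules)+
  have "exp (skew_exponent z + - W) = exp (skew_exponent z) * exp (- W)"
    using c(1) unfolding commuting_def by (rule exp_add_commuting)
  moreover have "exp (W + - skew_exponent z) = exp W * exp (- skew_exponent z)"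
    using c(2) unfolding commuting_def by (rule exp_add_commuting)
  moreover have "exp (- W) * a = a * exp (- W)"
    using c(3) unfolding commuting_def by (rule exp_commute[symmetric])
  moreover have "skew_exponent z + - W = - (scalar z * s)" "W + - skew_exponent z = scalar z * s"
    by (simp_all add: skew_exponent_def W_def)
  ultimately have "rosenblum z = exp (skew_exponent z) * a * (exp (- W) * exp W) * exp (- skew_exponent z)"
    by (simp add: rosenblum_def mult.assoc)
  also have "exp (- W) * exp W = 1"
    using exp_minus_inverse[of "- W"] by simp
  finally show ?thesis
    by simp
qed

lemma inner_skew_exponent: "inner (as_op (skew_exponent z) u) u = 0"
proof -
  have "inner (hadjoint N u) u = inner (N u) u"
    by (metis inner_adj inner_commute)
  moreover have "inner (J (hadjoint N u)) u = - inner (J (N u)) u"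
  proof -
    have "inner (J (hadjoint N u)) u = - inner (J u) (hadjoint N u)"
      by (simp add: inner_J_left inner_commute)
    also have "\<dots> = - inner (J (N u)) u"
      by (simp add: inner_adj[symmetric] N_J inner_commute)
    finally show ?thesis .
  qed
  ultimately show ?thesis
    by (simp add: skew_exponent_def as_op_diff as_op_mult as_op_scalar blinfun.bilinear_simps
        inner_diff_left inner_add_left)
qed

lemma norm_rosenblum_apply_le: "norm (as_op (rosenblum z) x) \<le> onorm A * norm x"
proof -
  have skew_minus: "inner (as_op (- skew_exponent z) u) u = 0" for u
    using inner_skew_exponent[of z u] by (simp add: as_op_minus blinfun.minus_left)
  have "norm (as_op (rosenblum z) x) = norm (A (as_op (exp (- skew_exponent z)) x))"
    by (simp add: rosenblum_eq_skew_conj as_op_mult norm_as_op_exp_skew[OF inner_skew_exponent])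
  also have "\<dots> \<le> onorm A * norm (as_op (exp (- skew_exponent z)) x)"
    by (rule onorm[OF bounded_linear_A])
  also have "\<dots> = onorm A * norm x"
    by (simp add: norm_as_op_exp_skew[OF skew_minus])
  finally show ?thesis .
qed

lemma rosenblum_shift: "rosenblum (z + w) = exp (- (scalar w * s)) * rosenblum z * exp (scalar w * s)"
proof -
  have c: "commuting (- (scalar w * s)) (- (scalar z * s))" "commuting (scalar z * s) (scalar w * s)"
    by (intro commuting_rules)+
  have "exp (- (scalar w * s) + - (scalar z * s)) = exp (- (scalar w * s)) * exp (- (scalar z * s))"
    using c(1) unfolding commuting_def by (rule exp_add_commuting)
  moreover have "exp (scalar z * s + scalar w * s) = exp (scalar z * s) * exp (scalar w * s)"
    using c(2) unfolding commuting_def by (rule exp_add_commuting)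
  moreover have "- (scalar w * s) + - (scalar z * s) = - (scalar (z + w) * s)"
    and "scalar z * s + scalar w * s = scalar (z + w) * s"
    by (simp_all add: scalar_add algebra_simps)
  ultimately show ?thesis
    by (simp add: rosenblum_def mult.assoc)
qed

lemma cinner_conj_exp_quadratic_remainder:
  assumes "commuting G j"
  shows "\<exists>K. \<forall>w. norm w \<le> 1 \<longrightarrow>
    norm (cinner (as_op (exp (- (scalar w * s)) * G * exp (scalar w * s)) x) y - cinner (as_op G x) y
      - w * cinner (as_op (G * s - s * G) x) y) \<le> K * norm w ^ 2"
proof (intro exI allI impI)
  fix w :: complex
  assume "norm w \<le> 1"
  define c Q where "c = (1 + norm j) * norm s"
    and "Q = norm G * (exp c + 1 + c * exp c + exp c * exp c)"
  define Z where "Z = scalar w * s"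
  have "Q \<ge> 0"
    by (simp add: Q_def c_def)
  have norm_Z: "norm Z \<le> norm w * c"
    using order_trans[OF norm_mult_ineq[of "scalar w" s] mult_right_mono[OF norm_scalar_le norm_ge_zero[of s]]]
    by (simp add: Z_def c_def mult.assoc)
  also have "\<dots> \<le> c"
    using \<open>norm w \<le> 1\<close> by (simp add: c_def mult_left_le_one_le)
  finally have "norm Z \<le> c" .
  have "G * Z = scalar w * (G * s)"
    using commuting_scalar(1)[OF assms, of w] by (simp add: Z_def commuting_def mult.assoc[symmetric])
  then have "scalar w * (G * s - s * G) = G * Z - Z * G"
    by (simp add: Z_def right_diff_distrib mult.assoc)
  then have "w * cinner (as_op (G * s - s * G) x) y = cinner (as_op (G * Z - Z * G) x) y"
    by (metis cinner_scalar as_op_mult blinfun_apply_blinfun_compose)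
  then have "cinner (as_op (exp (- Z) * G * exp Z) x) y - cinner (as_op G x) y
      - w * cinner (as_op (G * s - s * G) x) y
    = cinner (as_op (exp (- Z) * G * exp Z - G - (G * Z - Z * G)) x) y"
    by (simp add: as_op_diff blinfun.diff_left cinner_diff_left)
  also have "norm \<dots> \<le> 2 * (norm (exp (- Z) * G * exp Z - G - (G * Z - Z * G)) * norm x * norm y)"
    using norm_cinner_le mult_right_mono[OF norm_as_op_apply_le norm_ge_zero[of y]]
    by (rule order_trans[OF _ mult_left_mono]) simp
  also have "\<dots> \<le> 2 * (norm Z ^ 2 * Q * norm x * norm y)"
    using norm_exp_conj_sub_commutator_le[OF \<open>norm Z \<le> c\<close>, of G]
    by (intro mult_left_mono mult_right_mono) (simp_all add: Q_def)
  also have "\<dots> \<le> 2 * ((norm w * c) ^ 2 * Q * norm x * norm y)"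
    using norm_Z \<open>Q \<ge> 0\<close> by (intro mult_left_mono mult_right_mono power_mono) auto
  finally show "norm (cinner (as_op (exp (- (scalar w * s)) * G * exp (scalar w * s)) x) y
      - cinner (as_op G x) y - w * cinner (as_op (G * s - s * G) x) y)
    \<le> (2 * c^2 * Q * norm x * norm y) * norm w ^ 2"
    by (simp add: Z_def power_mult_distrib algebra_simps)
qed

lemma has_field_derivative_cinner_rosenblum:
  "((\<lambda>z. cinner (as_op (rosenblum z) x) y) has_field_derivative
     cinner (as_op (rosenblum z * s - s * rosenblum z) x) y) (at z)"
proof -
  have "commuting (rosenblum z) j"
    unfolding rosenblum_def by (intro commuting_rules)
  then obtain K where "\<forall>w. norm w \<le> 1 \<longrightarrow> norm (cinner (as_op (rosenblum (z + w)) x) y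
      - cinner (as_op (rosenblum z) x) y - w * cinner (as_op (rosenblum z * s - s * rosenblum z) x) y)
    \<le> K * norm w ^ 2"
    using cinner_conj_exp_quadratic_remainder[of "rosenblum z" x y] by (auto simp: rosenblum_shift)
  then show ?thesis
    by (intro has_field_derivative_quadratic_remainder) auto
qed

lemma cinner_commutator_eq_0: "cinner (as_op (a * s - s * a) x) y = 0"
proof -
  define h where "h z = cinner (as_op (rosenblum z) x) y" for z
  have h': "(h has_field_derivative cinner (as_op (rosenblum z * s - s * rosenblum z) x) y) (at z)" for z
    unfolding h_def by (rule has_field_derivative_cinner_rosenblum)
  have "norm (h z) \<le> 2 * (onorm A * norm x * norm y)" for z
    using norm_cinner_le[of "as_op (rosenblum z) x" y]
      mult_right_mono[OF norm_rosenblum_apply_le[of z x] norm_ge_zero[of y]]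
    unfolding h_def by linarith
  then have "bounded (range h)"
    by (auto simp: bounded_iff)
  moreover have "h holomorphic_on UNIV"
    using h' by (auto simp: holomorphic_on_open)
  ultimately obtain c where "h = (\<lambda>_. c)"
    using Liouville_theorem unfolding constant_on_def by blast
  then have "(h has_field_derivative 0) (at 0)"
    by simp
  moreover have "rosenblum 0 = a"
    by (simp add: rosenblum_def)
  ultimately show ?thesis
    using DERIV_unique[OF h'[of 0]] by simp
qed

lemma A_adj_commute: "A (hadjoint N x) = hadjoint N (A x)"
proof -
  have "inner (A (hadjoint N x) - hadjoint N (A x)) y = 0" for y
    using arg_cong[OF cinner_commutator_eq_0[of x y], of Re]
    by (simp add: Re_cinner as_op_diff as_op_mult blinfun.bilinear_simps)
  from this[of "A (hadjoint N x) - hadjoint N (A x)"] show ?thesis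
    by simp
qed

end

theorem fuglede:
  fixes J A N :: "'a::{real_inner,complete_space} \<Rightarrow> 'a"
  assumes "complex_structure J" "bounded_clinear_op J A" "normal_op J N" "A \<circ> N = N \<circ> A"
  shows "A \<circ> hadjoint N = hadjoint N \<circ> A"
proof -
  interpret fuglede_setting J A N
    using assms by unfold_locales
  show ?thesis
    by (simp add: fun_eq_iff A_adj_commute)
qed

section \<open>The self-commutator bound\<close>

lemma norm_le_of_numerical_bound:
  fixes S :: "'a::real_inner \<Rightarrow> 'a"
  assumes "linear S" and sym: "\<And>x y. inner (S x) y = inner x (S y)"
    and bound: "\<And>x. \<bar>inner (S x) x\<bar> \<le> c * norm x ^ 2"
  shows "norm (S x) \<le> c * norm x"
proof (cases "S x = 0")
  case True
  have "0 \<le> c" if "x \<noteq> 0"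
    using order_trans[OF abs_ge_zero bound[of x]] that by (simp add: zero_le_mult_iff)
  with True show ?thesis
    using linear_0[OF \<open>linear S\<close>] by (cases "x = 0") auto
next
  case False
  interpret S: linear S by (rule assms)
  have polar: "4 * inner (S x) y \<le> 2 * c * (norm x ^ 2 + norm y ^ 2)" for y
  proof -
    have "4 * inner (S x) y = inner (S (x + y)) (x + y) - inner (S (x - y)) (x - y)"
      using sym[of y x] by (simp add: S.add S.diff inner_add_left inner_add_right inner_diff_left
          inner_diff_right inner_commute)
    also have "\<dots> \<le> c * (norm (x - y) ^ 2 + norm (x + y) ^ 2)"
      using bound[of "x + y"] bound[of "x - y"] by (simp add: algebra_simps abs_le_iff)
    also have "\<dots> = 2 * c * (norm x ^ 2 + norm y ^ 2)"
      by (simp add: parallelogram_law algebra_simps)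
    finally show ?thesis .
  qed
  define y where "y = (norm x / norm (S x)) *\<^sub>R S x"
  have "norm y = norm x" "inner (S x) y = norm x * norm (S x)"
    using False by (simp_all add: y_def power2_norm_eq_inner[symmetric] power2_eq_square)
  then have "norm x * norm (S x) \<le> norm x * (c * norm x)"
    using polar[of y] by (simp add: power2_eq_square algebra_simps)
  moreover have "x \<noteq> 0"
    using False S.zero by auto
  ultimately show ?thesis
    by simp
qed

lemma onorm_self_commutator_le:
  fixes B :: "'a::{real_inner,complete_space} \<Rightarrow> 'a"
  assumes "bounded_linear B"
  shows "onorm (self_commutator B) \<le> (onorm B)\<^sup>2"
proof (rule onorm_bound)
  interpret B: bounded_linear B by (rule assms)
  interpret B_adj: bounded_linear "hadjoint B" by (rule bounded_linear_hadjoint[OF assms])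
  have adj: "inner (B x) y = inner x (hadjoint B y)" for x y
    by (rule inner_hadjoint[OF assms])
  show "0 \<le> (onorm B)\<^sup>2"
    by simp
  have inner_self_commutator:
    "inner (self_commutator B x) y = inner (B x) (B y) - inner (hadjoint B x) (hadjoint B y)" for x y
    by (simp add: self_commutator_def inner_diff_left) (metis adj inner_commute)
  fix x
  have "linear (self_commutator B)"
    unfolding self_commutator_def
    by (rule linearI) (simp_all add: B.add B.scaleR B_adj.add B_adj.scaleR algebra_simps)
  moreover have "inner (self_commutator B x) y = inner x (self_commutator B y)" for x y
    by (metis inner_self_commutator inner_commute)
  moreover have "\<bar>inner (self_commutator B x) x\<bar> \<le> (onorm B)\<^sup>2 * norm x ^ 2" for x
  proof -
    have "norm (B x) \<le> onorm B * norm x" "norm (hadjoint B x) \<le> onorm B * norm x"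
      using onorm[OF assms] norm_adjoint_apply_le[OF assms adj] by auto
    then have "norm (B x) ^ 2 \<le> (onorm B)\<^sup>2 * norm x ^ 2" "norm (hadjoint B x) ^ 2 \<le> (onorm B)\<^sup>2 * norm x ^ 2"
      by (simp_all add: power_mono flip: power_mult_distrib)
    moreover have "inner (self_commutator B x) x = norm (B x) ^ 2 - norm (hadjoint B x) ^ 2"
      by (simp add: inner_self_commutator power2_norm_eq_inner)
    ultimately show ?thesis
      using zero_le_power2[of "norm (B x)"] zero_le_power2[of "norm (hadjoint B x)"]
      unfolding abs_le_iff by linarith
  qed
  ultimately show "norm (self_commutator B x) \<le> (onorm B)\<^sup>2 * norm x"
    by (rule norm_le_of_numerical_bound)
qed

lemma self_commutator_add_normal:
  fixes A M :: "'a::{real_inner,complete_space} \<Rightarrow> 'a"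
  assumes "bounded_linear A" "bounded_linear M"
    and A_M_adj: "A \<circ> hadjoint M = hadjoint M \<circ> A"
    and normal: "hadjoint M \<circ> M = M \<circ> hadjoint M"
  shows "self_commutator (\<lambda>x. A x + M x) = self_commutator A"
proof -
  interpret A: bounded_linear A by (rule assms)
  interpret M: bounded_linear M by (rule assms)
  interpret A_adj: bounded_linear "hadjoint A" by (rule bounded_linear_hadjoint[OF assms(1)])
  interpret M_adj: bounded_linear "hadjoint M" by (rule bounded_linear_hadjoint[OF assms(2)])
  have "hadjoint (\<lambda>x. A x + M x) = (\<lambda>y. hadjoint A y + hadjoint M y)"
    by (rule hadjoint_eqI)
      (simp add: inner_add_left inner_add_right inner_hadjoint[OF assms(1)] inner_hadjoint[OF assms(2)])
  moreover have "A (hadjoint M x) = hadjoint M (A x)" for x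
    using A_M_adj by (simp add: fun_eq_iff)
  \<comment> \<open>The adjoint of the previous identity.\<close>
  moreover have "M (hadjoint A x) = hadjoint A (M x)" for x
  proof (rule vector_eq_ldot[THEN iffD1], intro allI)
    fix z
    have "inner z (M (hadjoint A x)) = inner (A (hadjoint M z)) x"
      by (metis inner_hadjoint[OF assms(1)] inner_hadjoint[OF assms(2)] inner_commute)
    also have "\<dots> = inner (hadjoint M (A z)) x"
      using A_M_adj by (simp add: fun_eq_iff)
    also have "\<dots> = inner z (hadjoint A (M x))"
      by (metis inner_hadjoint[OF assms(1)] inner_hadjoint[OF assms(2)] inner_commute)
    finally show "inner z (M (hadjoint A x)) = inner z (hadjoint A (M x))" .
  qed
  moreover have "hadjoint M (M x) = M (hadjoint M x)" for x
    using normal by (simp add: fun_eq_iff)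
  ultimately show ?thesis
    by (simp add: self_commutator_def fun_eq_iff A.add M.add A_adj.add M_adj.add algebra_simps)
qed

lemma zero_in_normal_commutant:
  assumes "complex_structure J" "bounded_clinear_op J A"
  shows "(\<lambda>x. 0) \<in> normal_commutant J A"
proof -
  have "hadjoint (\<lambda>x::'a. 0) = (\<lambda>x. 0)"
    by (rule hadjoint_eqI) simp
  moreover have "J 0 = 0" "A 0 = 0"
    using assms linear_0 bounded_linear.linear
    by (auto simp: complex_structure_def bounded_clinear_op_def)
  ultimately show ?thesis
    by (simp add: normal_commutant_def normal_op_def bounded_clinear_op_def o_def)
qed

theorem proposition1:
  fixes J A :: "'a::{real_inner, complete_space} \<Rightarrow> 'a"
  assumes "complex_structure J"
    and "bounded_clinear_op J A"
  shows "onorm (self_commutator A) \<le> (INF M \<in> normal_commutant J A. (onorm (\<lambda>x. A x + M x))\<^sup>2)"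
proof (rule cINF_greatest)
  show "normal_commutant J A \<noteq> {}"
    using zero_in_normal_commutant[OF assms] by blast
next
  fix M
  assume "M \<in> normal_commutant J A"
  then have M: "normal_op J M" "A \<circ> M = M \<circ> A"
    by (simp_all add: normal_commutant_def)
  have "bounded_linear A" "bounded_linear M"
    using assms(2) M(1) by (simp_all add: bounded_clinear_op_def normal_op_def)
  moreover have "hadjoint M \<circ> M = M \<circ> hadjoint M"
    using M(1) by (simp add: normal_op_def)
  ultimately have "self_commutator (\<lambda>x. A x + M x) = self_commutator A"
    using self_commutator_add_normal fuglede[OF assms M] by blast
  then show "onorm (self_commutator A) \<le> (onorm (\<lambda>x. A x + M x))\<^sup>2"
    using onorm_self_commutator_le[OF bounded_linear_add[OF \<open>bounded_linear A\<close> \<open>bounded_linear M\<close>]]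
    by simp
qed

end
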